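(* Let $\mathcal{C}$ be a locally small category. For each object $X \in \mathcal{I}\mathcal{C}$ and objects $a, b \in \mathcal{C}$, the actions of $\pi_1$ and $\pi_2$ on morphisms give bijections $\pi_1 \colon \mathcal{I}\mathcal{C}(Ya, X) \to \mathcal{P}\mathcal{C}(Ya, X^+)$ and $\pi_2 \colon \mathcal{I}\mathcal{C}(X, Yb) \to \mathcal{P}^\dagger\mathcal{C}(X^-, Yb)$.
   Context: $\mathcal{P}\mathcal{C} \subseteq [\mathcal{C}^{op}, \mathbf{Set}]$ is the full subcategory of small presheaves (small colimits of representables), and $\mathcal{P}^\dagger\mathcal{C} = \mathcal{P}(\mathcal{C}^{op})^{op} \subseteq [\mathcal{C}, \mathbf{Set}]^{op}$. The Isbell envelope $\mathcal{I}\mathcal{C}$ has objects triples $X = (X^+, X^-, \xi^X)$ with $X^+ \in \mathcal{P}\mathcal{C}$, $X^- \in \mathcal{P}^\dagger\mathcal{C}$, and $\xi^X_{ab} \colon X^-(b) \times X^+(a) \to \mathcal{C}(a,b)$ natural in $a, b$; a morphism $X \to Y$ is a pair $(f^+, f^-)$ with $f^+ \colon X^+ \to Y^+$ in $\mathcal{P}\mathcal{C}$ and $f^- \colon X^- \to Y^-$ in $\mathcal{P}^\dagger\mathcal{C}$ (i.e. a natural transformation $Y^- \to X^-$) such that $\xi^Y_{ab}\circ(1 \times f^+_a) = \xi^X_{ab} \circ (f^-_b \times 1)$ on $Y^-(b) \times X^+(a)$ for all $a,b$. The functors $\pi_1 \colon \mathcal{I}\mathcal{C}\to\mathcal{P}\mathcal{C}$,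 $\pi_2\colon\mathcal{I}\mathcal{C}\to\mathcal{P}^\dagger\mathcal{C}$ are the projections $X\mapsto X^+$, $X\mapsto X^-$. The Yoneda embeddings are $Y \colon \mathcal{C} \to \mathcal{P}\mathcal{C}$, $c \mapsto \mathcal{C}(-,c)$; $Y \colon \mathcal{C} \to \mathcal{P}^\dagger\mathcal{C}$, $c\mapsto\mathcal{C}(c,-)$; and $Y \colon \mathcal{C} \to \mathcal{I}\mathcal{C}$, $c \mapsto (\mathcal{C}(-,c), \mathcal{C}(c,-), \circ)$ where $\circ \colon \mathcal{C}(c,b)\times\mathcal{C}(a,c)\to\mathcal{C}(a,b)$ is composition; so $\pi_1 Y = Y$ and $\pi_2 Y = Y$. *)

theory Defs
  imports Main
begin

section \<open>Categories (locally small: hom-sets are HOL sets)\<close>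

record ('o, 'm) cat =
  Obj  :: "'o set"
  Arr  :: "'m set"
  Dom  :: "'m \<Rightarrow> 'o"
  Cod  :: "'m \<Rightarrow> 'o"
  Idm  :: "'o \<Rightarrow> 'm"
  Comp :: "'m \<Rightarrow> 'm \<Rightarrow> 'm"   (* Comp C g f = g \<circ> f *)

definition hom :: "('o, 'm) cat \<Rightarrow> 'o \<Rightarrow> 'o \<Rightarrow> 'm set" where
  "hom C a b = {f \<in> Arr C. Dom C f = a \<and> Cod C f = b}"

definition is_cat :: "('o, 'm) cat \<Rightarrow> bool" where
  "is_cat C \<longleftrightarrow>
     (\<forall>f \<in> Arr C. Dom C f \<in> Obj C \<and> Cod C f \<in> Obj C) \<and>
     (\<forall>a \<in> Obj C. Idm C a \<in> hom C a a) \<and>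
     (\<forall>f \<in> Arr C. \<forall>g \<in> Arr C. Cod C f = Dom C g \<longrightarrow>
        Comp C g f \<in> hom C (Dom C f) (Cod C g)) \<and>
     (\<forall>f \<in> Arr C. Comp C f (Idm C (Dom C f)) = f \<and> Comp C (Idm C (Cod C f)) f = f) \<and>
     (\<forall>f \<in> Arr C. \<forall>g \<in> Arr C. \<forall>h \<in> Arr C. Cod C f = Dom C g \<longrightarrow> Cod C g = Dom C h \<longrightarrow>
        Comp C h (Comp C g f) = Comp C (Comp C h g) f)"

record ('o, 'm, 'v) psh =
  PObj :: "'o \<Rightarrow> 'v set"
  PMap :: "'m \<Rightarrow> 'v \<Rightarrow> 'v"

definition is_presheaf :: "('o, 'm) cat \<Rightarrow> ('o, 'm, 'v) psh \<Rightarrow> bool" where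
  "is_presheaf C F \<longleftrightarrow>
     (\<forall>f \<in> Arr C. \<forall>x \<in> PObj F (Cod C f). PMap F f x \<in> PObj F (Dom C f)) \<and>
     (\<forall>a \<in> Obj C. \<forall>x \<in> PObj F a. PMap F (Idm C a) x = x) \<and>
     (\<forall>f \<in> Arr C. \<forall>g \<in> Arr C. Cod C f = Dom C g \<longrightarrow>
        (\<forall>x \<in> PObj F (Cod C g). PMap F (Comp C g f) x = PMap F f (PMap F g x)))"

definition is_copresheaf :: "('o, 'm) cat \<Rightarrow> ('o, 'm, 'v) psh \<Rightarrow> bool" where
  "is_copresheaf C F \<longleftrightarrow>
     (\<forall>f \<in> Arr C. \<forall>x \<in> PObj F (Dom C f). PMap F f x \<in> PObj F (Cod C f)) \<and>
     (\<forall>a \<in> Obj C. \<forall>x \<in> PObj F a. PMap F (Idm C a) x = x) \<and>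
     (\<forall>f \<in> Arr C. \<forall>g \<in> Arr C. Cod C f = Dom C g \<longrightarrow>
        (\<forall>x \<in> PObj F (Dom C f). PMap F (Comp C g f) x = PMap F g (PMap F f x)))"

definition nat_psh :: "('o, 'm) cat \<Rightarrow> ('o, 'm, 'u) psh \<Rightarrow> ('o, 'm, 'v) psh
                      \<Rightarrow> ('o \<Rightarrow> 'u \<Rightarrow> 'v) \<Rightarrow> bool" where
  "nat_psh C F G \<eta> \<longleftrightarrow>
     (\<forall>c \<in> Obj C. \<forall>x \<in> PObj F c. \<eta> c x \<in> PObj G c) \<and>
     (\<forall>f \<in> Arr C. \<forall>x \<in> PObj F (Cod C f).
        \<eta> (Dom C f) (PMap F f x) = PMap G f (\<eta> (Cod C f) x)) \<and>
     (\<forall>c x. (c \<notin> Obj C \<or> x \<notin> PObj F c) \<longrightarrow> \<eta> c x = undefined)"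

definition nat_copsh :: "('o, 'm) cat \<Rightarrow> ('o, 'm, 'u) psh \<Rightarrow> ('o, 'm, 'v) psh
                      \<Rightarrow> ('o \<Rightarrow> 'u \<Rightarrow> 'v) \<Rightarrow> bool" where
  "nat_copsh C F G \<eta> \<longleftrightarrow>
     (\<forall>c \<in> Obj C. \<forall>x \<in> PObj F c. \<eta> c x \<in> PObj G c) \<and>
     (\<forall>f \<in> Arr C. \<forall>x \<in> PObj F (Dom C f).
        \<eta> (Cod C f) (PMap F f x) = PMap G f (\<eta> (Dom C f) x)) \<and>
     (\<forall>c x. (c \<notin> Obj C \<or> x \<notin> PObj F c) \<longrightarrow> \<eta> c x = undefined)"

definition yoneda_psh :: "('o, 'm) cat \<Rightarrow> 'o \<Rightarrow> ('o, 'm, 'm) psh" where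
  "yoneda_psh C c = \<lparr>PObj = (\<lambda>d. hom C d c), PMap = (\<lambda>f g. Comp C g f)\<rparr>"

definition yoneda_copsh :: "('o, 'm) cat \<Rightarrow> 'o \<Rightarrow> ('o, 'm, 'm) psh" where
  "yoneda_copsh C c = \<lparr>PObj = (\<lambda>d. hom C c d), PMap = (\<lambda>f g. Comp C f g)\<rparr>"

record ('o, 'm, 'v, 'w) isb =
  Pos :: "('o, 'm, 'v) psh"
  Neg :: "('o, 'm, 'w) psh"      (* X^- : copresheaf, object of P\<dagger>C *)
  Xi  :: "'o \<Rightarrow> 'o \<Rightarrow> 'w \<Rightarrow> 'v \<Rightarrow> 'm"   (* Xi a b : X^-(b) \<times> X^+(a) \<rightarrow> C(a,b) *)

definition is_isbell :: "('o, 'm) cat \<Rightarrow> ('o, 'm, 'v, 'w) isb \<Rightarrow> bool" where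
  "is_isbell C X \<longleftrightarrow>
     is_presheaf C (Pos X) \<and> is_copresheaf C (Neg X) \<and>
     (\<forall>a \<in> Obj C. \<forall>b \<in> Obj C. \<forall>y \<in> PObj (Neg X) b. \<forall>x \<in> PObj (Pos X) a.
        Xi X a b y x \<in> hom C a b) \<and>
     (\<forall>f \<in> Arr C. \<forall>b \<in> Obj C. \<forall>y \<in> PObj (Neg X) b. \<forall>x \<in> PObj (Pos X) (Cod C f).
        Xi X (Dom C f) b y (PMap (Pos X) f x) = Comp C (Xi X (Cod C f) b y x) f) \<and>
     (\<forall>g \<in> Arr C. \<forall>a \<in> Obj C. \<forall>y \<in> PObj (Neg X) (Dom C g). \<forall>x \<in> PObj (Pos X) a.
        Xi X a (Cod C g) (PMap (Neg X) g y) x = Comp C g (Xi X a (Dom C g) y x))"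

text \<open>Morphisms X \<rightarrow> Y in IC: pairs (f+, f-), f+ : X^+ \<Rightarrow> Y^+ and f- a natural
  transformation Y^- \<Rightarrow> X^- of copresheaves (a morphism X^- \<rightarrow> Y^- in P\<dagger>C).\<close>
definition isb_hom :: "('o, 'm) cat \<Rightarrow> ('o, 'm, 'v, 'w) isb \<Rightarrow> ('o, 'm, 'v2, 'w2) isb
    \<Rightarrow> (('o \<Rightarrow> 'v \<Rightarrow> 'v2) \<times> ('o \<Rightarrow> 'w2 \<Rightarrow> 'w)) set" where
  "isb_hom C X Y = {(fp, fm).
     nat_psh C (Pos X) (Pos Y) fp \<and> nat_copsh C (Neg Y) (Neg X) fm \<and>
     (\<forall>a \<in> Obj C. \<forall>b \<in> Obj C. \<forall>y \<in> PObj (Neg Y) b. \<forall>x \<in> PObj (Pos X) a.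
        Xi Y a b y (fp a x) = Xi X a b (fm b y) x)}"

definition yoneda_isb :: "('o, 'm) cat \<Rightarrow> 'o \<Rightarrow> ('o, 'm, 'm, 'm) isb" where
  "yoneda_isb C c = \<lparr>Pos = yoneda_psh C c, Neg = yoneda_copsh C c,
                     Xi = (\<lambda>a b g f. Comp C g f)\<rparr>"

end

theory Submission
  imports Defs
begin

text \<open>A morphism \<open>Ya \<rightarrow> X\<close> is determined by its positive part \<open>f\<^sup>+\<close>: the compatibility
  condition at \<open>id\<^sub>a\<close> forces \<open>f\<^sup>- y = \<xi>\<^sup>X(y, x\<^sub>0)\<close> with \<open>x\<^sub>0 = f\<^sup>+(id\<^sub>a)\<close>. Conversely, for every
  natural \<open>f\<^sup>+\<close> this formula defines a natural \<open>f\<^sup>-\<close> (naturality of \<open>\<xi>\<^sup>X\<close> in \<open>b\<close>), and the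
  compatibility condition holds because by Yoneda \<open>f\<^sup>+(h) = X\<^sup>+(h)(x\<^sub>0)\<close> and \<open>\<xi>\<^sup>X\<close> is natural
  in \<open>a\<close>. The statement for morphisms \<open>X \<rightarrow> Yb\<close> is dual.\<close>

lemma bij_betw_fst_graph:
  assumes "\<And>p. p \<in> S \<Longrightarrow> fst p \<in> T \<and> snd p = g (fst p)"
    and "\<And>x. x \<in> T \<Longrightarrow> (x, g x) \<in> S"
  shows "bij_betw fst S T"
  unfolding bij_betw_def
proof
  show "inj_on fst S"
    by (rule inj_onI) (metis assms(1) prod.expand)
  show "fst ` S = T"
    using assms by force
qed

lemma bij_betw_snd_graph:
  assumes "\<And>p. p \<in> S \<Longrightarrow> snd p \<in> T \<and> fst p = g (snd p)"
    and "\<And>y. y \<in> T \<Longrightarrow> (g y, y) \<in> S"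
  shows "bij_betw snd S T"
  unfolding bij_betw_def
proof
  show "inj_on snd S"
    by (rule inj_onI) (metis assms(1) prod.expand)
  show "snd ` S = T"
    using assms by force
qed


lemma homD:
  assumes "f \<in> hom C a b"
  shows "f \<in> Arr C" and "Dom C f = a" and "Cod C f = b"
  using assms unfolding hom_def by auto

lemma cat_Idm_hom: "is_cat C \<Longrightarrow> a \<in> Obj C \<Longrightarrow> Idm C a \<in> hom C a a"
  unfolding is_cat_def by blast

lemma cat_Dom_Cod_Obj: "is_cat C \<Longrightarrow> f \<in> Arr C \<Longrightarrow> Dom C f \<in> Obj C \<and> Cod C f \<in> Obj C"
  unfolding is_cat_def by blast

lemma cat_comp_Idm_right: "is_cat C \<Longrightarrow> f \<in> hom C a b \<Longrightarrow> Comp C f (Idm C a) = f"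
  unfolding is_cat_def hom_def by auto

lemma cat_comp_Idm_left: "is_cat C \<Longrightarrow> f \<in> hom C a b \<Longrightarrow> Comp C (Idm C b) f = f"
  unfolding is_cat_def hom_def by auto


lemma nat_psh_yoneda_eq:
  assumes C: "is_cat C" and a: "a \<in> Obj C"
    and \<eta>: "nat_psh C (yoneda_psh C a) F \<eta>" and h: "h \<in> hom C c a"
  shows "\<eta> c h = PMap F h (\<eta> a (Idm C a))"
proof -
  have "\<eta> (Dom C h) (Comp C (Idm C a) h) = PMap F h (\<eta> (Cod C h) (Idm C a))"
    using \<eta> homD[OF h] cat_Idm_hom[OF C a] unfolding nat_psh_def yoneda_psh_def by auto
  then show ?thesis
    using homD[OF h] cat_comp_Idm_left[OF C h] by simp
qed

lemma nat_copsh_yoneda_eq: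
  assumes C: "is_cat C" and b: "b \<in> Obj C"
    and \<eta>: "nat_copsh C (yoneda_copsh C b) F \<eta>" and h: "h \<in> hom C b c"
  shows "\<eta> c h = PMap F h (\<eta> b (Idm C b))"
proof -
  have "\<eta> (Cod C h) (Comp C h (Idm C b)) = PMap F h (\<eta> (Dom C h) (Idm C b))"
    using \<eta> homD[OF h] cat_Idm_hom[OF C b] unfolding nat_copsh_def yoneda_copsh_def by auto
  then show ?thesis
    using homD[OF h] cat_comp_Idm_right[OF C h] by simp
qed

lemma nat_psh_in_PObj:
  "nat_psh C F G \<eta> \<Longrightarrow> c \<in> Obj C \<Longrightarrow> x \<in> PObj F c \<Longrightarrow> \<eta> c x \<in> PObj G c"
  unfolding nat_psh_def by blast

lemma nat_copsh_in_PObj: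
  "nat_copsh C F G \<eta> \<Longrightarrow> c \<in> Obj C \<Longrightarrow> x \<in> PObj F c \<Longrightarrow> \<eta> c x \<in> PObj G c"
  unfolding nat_copsh_def by blast


lemma isbell_Xi_hom:
  "is_isbell C X \<Longrightarrow> a \<in> Obj C \<Longrightarrow> b \<in> Obj C \<Longrightarrow> y \<in> PObj (Neg X) b \<Longrightarrow> x \<in> PObj (Pos X) a
    \<Longrightarrow> Xi X a b y x \<in> hom C a b"
  unfolding is_isbell_def by blast

lemma isbell_Xi_natural_Pos:
  "is_isbell C X \<Longrightarrow> f \<in> Arr C \<Longrightarrow> b \<in> Obj C \<Longrightarrow> y \<in> PObj (Neg X) b
    \<Longrightarrow> x \<in> PObj (Pos X) (Cod C f)
    \<Longrightarrow> Xi X (Dom C f) b y (PMap (Pos X) f x) = Comp C (Xi X (Cod C f) b y x) f"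
  unfolding is_isbell_def by blast

lemma isbell_Xi_natural_Neg:
  "is_isbell C X \<Longrightarrow> g \<in> Arr C \<Longrightarrow> a \<in> Obj C \<Longrightarrow> y \<in> PObj (Neg X) (Dom C g)
    \<Longrightarrow> x \<in> PObj (Pos X) a
    \<Longrightarrow> Xi X a (Cod C g) (PMap (Neg X) g y) x = Comp C g (Xi X a (Dom C g) y x)"
  unfolding is_isbell_def by blast

lemma isbell_PMap_Pos:
  "is_isbell C X \<Longrightarrow> f \<in> Arr C \<Longrightarrow> x \<in> PObj (Pos X) (Cod C f)
    \<Longrightarrow> PMap (Pos X) f x \<in> PObj (Pos X) (Dom C f)"
  unfolding is_isbell_def is_presheaf_def by blast

lemma isbell_PMap_Neg:
  "is_isbell C X \<Longrightarrow> g \<in> Arr C \<Longrightarrow> y \<in> PObj (Neg X) (Dom C g)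
    \<Longrightarrow> PMap (Neg X) g y \<in> PObj (Neg X) (Cod C g)"
  unfolding is_isbell_def is_copresheaf_def by blast

definition Xi_at_Pos :: "('o, 'm) cat \<Rightarrow> ('o, 'm, 'v, 'w) isb \<Rightarrow> 'o \<Rightarrow> 'v \<Rightarrow> 'o \<Rightarrow> 'w \<Rightarrow> 'm"
  where "Xi_at_Pos C X a x =
    (\<lambda>b y. if b \<in> Obj C \<and> y \<in> PObj (Neg X) b then Xi X a b y x else undefined)"

definition Xi_at_Neg :: "('o, 'm) cat \<Rightarrow> ('o, 'm, 'v, 'w) isb \<Rightarrow> 'o \<Rightarrow> 'w \<Rightarrow> 'o \<Rightarrow> 'v \<Rightarrow> 'm"
  where "Xi_at_Neg C X b y =
    (\<lambda>a x. if a \<in> Obj C \<and> x \<in> PObj (Pos X) a then Xi X a b y x else undefined)"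

lemma nat_copsh_Xi_at_Pos:
  assumes C: "is_cat C" and X: "is_isbell C X"
    and a: "a \<in> Obj C" and x: "x \<in> PObj (Pos X) a"
  shows "nat_copsh C (Neg X) (yoneda_copsh C a) (Xi_at_Pos C X a x)"
  using isbell_Xi_hom[OF X a _ _ x] isbell_Xi_natural_Neg[OF X _ a _ x]
    isbell_PMap_Neg[OF X] cat_Dom_Cod_Obj[OF C]
  unfolding nat_copsh_def yoneda_copsh_def Xi_at_Pos_def by auto

lemma nat_psh_Xi_at_Neg:
  assumes C: "is_cat C" and X: "is_isbell C X"
    and b: "b \<in> Obj C" and y: "y \<in> PObj (Neg X) b"
  shows "nat_psh C (Pos X) (yoneda_psh C b) (Xi_at_Neg C X b y)"
  using isbell_Xi_hom[OF X _ b y] isbell_Xi_natural_Pos[OF X _ b y]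
    isbell_PMap_Pos[OF X] cat_Dom_Cod_Obj[OF C]
  unfolding nat_psh_def yoneda_psh_def Xi_at_Neg_def by auto


lemma isb_hom_from_yoneda_Neg_eq:
  assumes C: "is_cat C" and a: "a \<in> Obj C"
    and f: "(fp, fm) \<in> isb_hom C (yoneda_isb C a) X"
  shows "fm = Xi_at_Pos C X a (fp a (Idm C a))"
proof (intro ext)
  fix b y
  have fm: "nat_copsh C (Neg X) (yoneda_copsh C a) fm"
    and compat: "\<And>b. b \<in> Obj C \<Longrightarrow> y \<in> PObj (Neg X) b \<Longrightarrow>
      Xi X a b y (fp a (Idm C a)) = Comp C (fm b y) (Idm C a)"
    using f cat_Idm_hom[OF C a] a unfolding isb_hom_def yoneda_isb_def yoneda_psh_def by auto
  show "fm b y = Xi_at_Pos C X a (fp a (Idm C a)) b y"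
  proof (cases "b \<in> Obj C \<and> y \<in> PObj (Neg X) b")
    case True
    have "fm b y \<in> hom C a b"
      using nat_copsh_in_PObj[OF fm] True unfolding yoneda_copsh_def by auto
    then show ?thesis
      using True compat cat_comp_Idm_right[OF C] unfolding Xi_at_Pos_def by simp
  next
    case False
    then show ?thesis
      using fm unfolding nat_copsh_def Xi_at_Pos_def by auto
  qed
qed

lemma isb_hom_to_yoneda_Pos_eq:
  assumes C: "is_cat C" and b: "b \<in> Obj C"
    and f: "(fp, fm) \<in> isb_hom C X (yoneda_isb C b)"
  shows "fp = Xi_at_Neg C X b (fm b (Idm C b))"
proof (intro ext)
  fix a x
  have fp: "nat_psh C (Pos X) (yoneda_psh C b) fp"
    and compat: "\<And>a. a \<in> Obj C \<Longrightarrow> x \<in> PObj (Pos X) a \<Longrightarrow>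
      Comp C (Idm C b) (fp a x) = Xi X a b (fm b (Idm C b)) x"
    using f cat_Idm_hom[OF C b] b unfolding isb_hom_def yoneda_isb_def yoneda_copsh_def by auto
  show "fp a x = Xi_at_Neg C X b (fm b (Idm C b)) a x"
  proof (cases "a \<in> Obj C \<and> x \<in> PObj (Pos X) a")
    case True
    have "fp a x \<in> hom C a b"
      using nat_psh_in_PObj[OF fp] True unfolding yoneda_psh_def by auto
    then show ?thesis
      using True compat cat_comp_Idm_left[OF C] unfolding Xi_at_Neg_def by metis
  next
    case False
    then show ?thesis
      using fp unfolding nat_psh_def Xi_at_Neg_def by auto
  qed
qed

lemma isb_hom_from_yoneda_intro:
  assumes C: "is_cat C" and X: "is_isbell C X" and a: "a \<in> Obj C"
    and fp: "nat_psh C (yoneda_psh C a) (Pos X) fp"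
  shows "(fp, Xi_at_Pos C X a (fp a (Idm C a))) \<in> isb_hom C (yoneda_isb C a) X"
proof -
  define x\<^sub>0 where "x\<^sub>0 = fp a (Idm C a)"
  have x\<^sub>0: "x\<^sub>0 \<in> PObj (Pos X) a"
    using nat_psh_in_PObj[OF fp a] cat_Idm_hom[OF C a] unfolding x\<^sub>0_def yoneda_psh_def by simp
  have "Xi X c b y (fp c h) = Comp C (Xi_at_Pos C X a x\<^sub>0 b y) h"
    if "c \<in> Obj C" "b \<in> Obj C" "y \<in> PObj (Neg X) b" "h \<in> hom C c a" for c b y h
  proof -
    have "fp c h = PMap (Pos X) h x\<^sub>0"
      using nat_psh_yoneda_eq[OF C a fp that(4)] unfolding x\<^sub>0_def .
    then show ?thesis
      using that homD[OF that(4)] isbell_Xi_natural_Pos[OF X _ _ _ x\<^sub>0[folded homD(3)[OF that(4)]]]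
      unfolding Xi_at_Pos_def by auto
  qed
  then show ?thesis
    using fp nat_copsh_Xi_at_Pos[OF C X a x\<^sub>0]
    unfolding isb_hom_def yoneda_isb_def yoneda_psh_def x\<^sub>0_def by auto
qed

lemma isb_hom_to_yoneda_intro:
  assumes C: "is_cat C" and X: "is_isbell C X" and b: "b \<in> Obj C"
    and fm: "nat_copsh C (yoneda_copsh C b) (Neg X) fm"
  shows "(Xi_at_Neg C X b (fm b (Idm C b)), fm) \<in> isb_hom C X (yoneda_isb C b)"
proof -
  define y\<^sub>0 where "y\<^sub>0 = fm b (Idm C b)"
  have y\<^sub>0: "y\<^sub>0 \<in> PObj (Neg X) b"
    using nat_copsh_in_PObj[OF fm b] cat_Idm_hom[OF C b] unfolding y\<^sub>0_def yoneda_copsh_def by simp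
  have "Comp C h (Xi_at_Neg C X b y\<^sub>0 c x) = Xi X c d (fm d h) x"
    if "c \<in> Obj C" "d \<in> Obj C" "h \<in> hom C b d" "x \<in> PObj (Pos X) c" for c d h x
  proof -
    have "fm d h = PMap (Neg X) h y\<^sub>0"
      using nat_copsh_yoneda_eq[OF C b fm that(3)] unfolding y\<^sub>0_def .
    then show ?thesis
      using that homD[OF that(3)] isbell_Xi_natural_Neg[OF X _ _ y\<^sub>0[folded homD(2)[OF that(3)]]]
      unfolding Xi_at_Neg_def by auto
  qed
  then show ?thesis
    using fm nat_psh_Xi_at_Neg[OF C X b y\<^sub>0]
    unfolding isb_hom_def yoneda_isb_def yoneda_copsh_def y\<^sub>0_def by auto
qed

lemma bij_betw_fst_isb_hom_from_yoneda:
  assumes "is_cat C" and "is_isbell C X" and "a \<in> Obj C"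
  shows "bij_betw fst (isb_hom C (yoneda_isb C a) X) {\<eta>. nat_psh C (yoneda_psh C a) (Pos X) \<eta>}"
proof (rule bij_betw_fst_graph)
  fix p assume "p \<in> isb_hom C (yoneda_isb C a) X"
  then show "fst p \<in> {\<eta>. nat_psh C (yoneda_psh C a) (Pos X) \<eta>} \<and>
      snd p = Xi_at_Pos C X a (fst p a (Idm C a))"
    using isb_hom_from_yoneda_Neg_eq[OF assms(1,3), of "fst p" "snd p"]
    unfolding isb_hom_def yoneda_isb_def by auto
qed (use isb_hom_from_yoneda_intro[OF assms] in simp)

lemma bij_betw_snd_isb_hom_to_yoneda:
  assumes "is_cat C" and "is_isbell C X" and "b \<in> Obj C"
  shows "bij_betw snd (isb_hom C X (yoneda_isb C b)) {\<eta>. nat_copsh C (yoneda_copsh C b) (Neg X) \<eta>}"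
proof (rule bij_betw_snd_graph)
  fix p assume "p \<in> isb_hom C X (yoneda_isb C b)"
  then show "snd p \<in> {\<eta>. nat_copsh C (yoneda_copsh C b) (Neg X) \<eta>} \<and>
      fst p = Xi_at_Neg C X b (snd p b (Idm C b))"
    using isb_hom_to_yoneda_Pos_eq[OF assms(1,3), of "fst p" "snd p"]
    unfolding isb_hom_def yoneda_isb_def by auto
qed (use isb_hom_to_yoneda_intro[OF assms] in simp)

theorem lemma3p2:
  fixes C :: "('o, 'm) cat" and X :: "('o, 'm, 'v, 'w) isb"
  assumes "is_cat C" and "is_isbell C X" and "a \<in> Obj C" and "b \<in> Obj C"
  shows "bij_betw fst (isb_hom C (yoneda_isb C a) X)
                      {\<eta>. nat_psh C (yoneda_psh C a) (Pos X) \<eta>}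
       \<and> bij_betw snd (isb_hom C X (yoneda_isb C b))
                      {\<eta>. nat_copsh C (yoneda_copsh C b) (Neg X) \<eta>}"
  using bij_betw_fst_isb_hom_from_yoneda[OF assms(1-3)]
    bij_betw_snd_isb_hom_to_yoneda[OF assms(1,2,4)] by simp

end
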